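(* Let $p(\cdot\mid z)$, $z\in\mathcal{Z}^{\times}$, be an additive energy distribution (AED) family with energy map $E:\mathbb{R}^n\to\mathbb{R}^{md}$, i.e. $p(x\mid z)=\frac{1}{\mathbb{Z}(z)}\exp(-\langle\sigma(z),E(x)\rangle)$ with $\mathbb{Z}(z)=\int\exp(-\langle\sigma(z),E(x)\rangle)\,dx<\infty$. Let $\hat E:\mathbb{R}^n\to\mathbb{R}^{md}$ be another map with $\hat{\mathbb{Z}}(z)=\int\exp(-\langle\sigma(z),\hat E(x)\rangle)\,dx<\infty$ for all $z\in\mathcal{Z}^{\times}$, and define the learned AED $\hat p(x\mid z)=\frac{1}{\hat{\mathbb{Z}}(z)}\exp(-\langle\sigma(z),\hat E(x)\rangle)$ for all $z\in\mathcal{Z}^{\times}$. If $\hat p(\cdot\mid z)=p(\cdot\mid z)$ for all $z\in\mathcal{Z}^{\mathsf{train}}$, then $\hat p(\cdot\mid z')=p(\cdot\mid z')$ for all $z'\in\mathsf{DAff}(\mathcal{Z}^{\mathsf{train}})$.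
   Context: An attribute vector is $z=(z_1,\dots,z_m)$ with each $z_i\in\{1,\dots,d\}$; $\mathcal{Z}=\{1,\dots,d\}^m$. For $z\in\mathcal{Z}$, $\sigma(z)\in\{0,1\}^{md}$ denotes the concatenation of the one-hot encodings of $z_1,\dots,z_m$. For a finite set $\mathcal{A}=\{z^{(1)},\dots,z^{(k)}\}\subseteq\mathcal{Z}$, its discrete affine hull is $\mathsf{DAff}(\mathcal{A})=\{z\in\mathcal{Z}:\exists\alpha\in\mathbb{R}^k,\ \sum_i\alpha_i=1,\ \sigma(z)=\sum_{i=1}^k\alpha_i\sigma(z^{(i)})\}$. There is a training distribution $p(x,z)=p(z)p(x\mid z)$ on $\mathbb{R}^n\times\mathcal{Z}$; $\mathcal{Z}^{\mathsf{train}}$ is the support of $p(z)$, $\mathcal{Z}_i^{\mathsf{train}}$ is the set of values taken by the $i$-th coordinate on $\mathcal{Z}^{\mathsf{train}}$, and $\mathcal{Z}^{\times}=\mathcal{Z}_1^{\mathsf{train}}\times\cdots\times\mathcal{Z}_m^{\mathsf{train}}$. The densities $p(\cdot\mid z)$ are assumed to have support $\mathbb{R}^n$ for every $z\in\mathcal{Z}^{\times}$. *)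

theory Defs
  imports "HOL-Analysis.Analysis"
begin

text \<open>Attribute vectors z = (z_1,...,z_m) with z_i in {1..d} are represented as lists of
  length m (position i < m holds z_{i+1}).\<close>
definition attrs :: "nat \<Rightarrow> nat \<Rightarrow> nat list set" where
  "attrs m d = {z. length z = m \<and> set z \<subseteq> {1..d}}"

text \<open>sigma(z): concatenated one-hot encodings, indexed by (i,k) with i < m, k in {1..d}.\<close>
definition onehot :: "nat list \<Rightarrow> nat \<Rightarrow> nat \<Rightarrow> real" where
  "onehot z i k = (if i < length z \<and> z ! i = k then 1 else 0)"

text \<open>Inner product <sigma(z), e> for e in R^{md} (indexed by (i,k)).\<close>
definition energy :: "nat \<Rightarrow> nat \<Rightarrow> nat list \<Rightarrow> (nat \<Rightarrow> nat \<Rightarrow> real) \<Rightarrow> real" where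
  "energy m d z e = (\<Sum>i<m. \<Sum>k\<in>{1..d}. onehot z i k * e i k)"

definition DAff :: "nat \<Rightarrow> nat \<Rightarrow> nat list set \<Rightarrow> nat list set" where
  "DAff m d A = {z \<in> attrs m d. \<exists>\<alpha> :: nat list \<Rightarrow> real. (\<Sum>a\<in>A. \<alpha> a) = 1 \<and>
      (\<forall>i<m. \<forall>k\<in>{1..d}. onehot z i k = (\<Sum>a\<in>A. \<alpha> a * onehot a i k))}"

definition Zcross :: "nat \<Rightarrow> nat list set \<Rightarrow> nat list set" where
  "Zcross m Ztr = {z. length z = m \<and> (\<forall>i<m. z ! i \<in> (\<lambda>a. a ! i) ` Ztr)}"

definition aed :: "nat \<Rightarrow> nat \<Rightarrow> ('a::euclidean_space \<Rightarrow> nat \<Rightarrow> nat \<Rightarrow> real) \<Rightarrow> nat list \<Rightarrow> 'a \<Rightarrow> real" where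
  "aed m d E z x = exp (- energy m d z (E x)) /
     integral\<^sup>L lborel (\<lambda>y. exp (- energy m d z (E y)))"

end

theory Submission
  imports Defs
begin

text \<open>On every training attribute vector the two normalised densities agree and are positive,
  so the energies of the learned and the true model differ there only by a constant, the log-ratio
  of the partition functions. The energy is linear in the one-hot encoding, so for
  \<open>\<sigma>(z') = \<Sigma>\<^sub>a \<alpha>\<^sub>a \<sigma>(a)\<close> the two energies at \<open>z'\<close> again differ by a constant,
  and a constant shift of the energy is cancelled by normalisation.\<close>

lemma integral_pos_if_pos:
  fixes f :: "'a \<Rightarrow> real"
  assumes "integrable M f" and pos: "\<And>x. x \<in> space M \<Longrightarrow> 0 < f x"
    and "emeasure M (space M) \<noteq> 0"
  shows "0 < integral\<^sup>L M f"
proof -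
  have nonneg: "AE x in M. 0 \<le> f x"
    using pos by (simp add: less_imp_le)
  have "integral\<^sup>L M f \<noteq> 0"
  proof
    assume "integral\<^sup>L M f = 0"
    then have "AE x in M. f x = 0"
      using integral_nonneg_eq_0_iff_AE[OF \<open>integrable M f\<close> nonneg] by simp
    with AE_space have "AE x in M. \<not> True"
      by eventually_elim (use pos in fastforce)
    then show False
      using emeasure_eq_0_AE[of "\<lambda>_. True" M] \<open>emeasure M (space M) \<noteq> 0\<close> by simp
  qed
  with integral_nonneg_AE[OF nonneg] show ?thesis
    by simp
qed

lemma normalized_exp_eq_imp_shift:
  fixes f g :: "'a \<Rightarrow> real"
  assumes int_f: "integrable M (\<lambda>x. exp (- f x))" and int_g: "integrable M (\<lambda>x. exp (- g x))"
    and "emeasure M (space M) \<noteq> 0"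
    and eq: "\<forall>x\<in>space M. exp (- f x) / integral\<^sup>L M (\<lambda>y. exp (- f y))
                        = exp (- g x) / integral\<^sup>L M (\<lambda>y. exp (- g y))"
  shows "\<exists>c. \<forall>x\<in>space M. f x = g x + c"
proof -
  define Zf where "Zf = integral\<^sup>L M (\<lambda>y. exp (- f y))"
  define Zg where "Zg = integral\<^sup>L M (\<lambda>y. exp (- g y))"
  have "0 < Zf" "0 < Zg"
    unfolding Zf_def Zg_def
    using int_f int_g \<open>emeasure M (space M) \<noteq> 0\<close> by (auto intro!: integral_pos_if_pos)
  have "f x = g x + ln (Zg / Zf)" if "x \<in> space M" for x
  proof -
    have "exp (- f x) * Zg = exp (- g x) * Zf"
      using eq that \<open>0 < Zf\<close> \<open>0 < Zg\<close> unfolding Zf_def Zg_def by (simp add: field_simps)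
    then have "ln (exp (- f x) * Zg) = ln (exp (- g x) * Zf)"
      by simp
    then have "- f x + ln Zg = - g x + ln Zf"
      using \<open>0 < Zf\<close> \<open>0 < Zg\<close> by (simp add: ln_mult)
    then show ?thesis
      using \<open>0 < Zf\<close> \<open>0 < Zg\<close> by (simp add: ln_div)
  qed
  then show ?thesis
    by blast
qed

lemma normalized_exp_shift_invariant:
  fixes f g :: "'a \<Rightarrow> real"
  assumes "\<And>x. f x = g x + c"
  shows "exp (- f x) / integral\<^sup>L M (\<lambda>y. exp (- f y))
       = exp (- g x) / integral\<^sup>L M (\<lambda>y. exp (- g y))"
proof -
  have "exp (- f y) = exp (- g y) * exp (- c)" for y
    using assms by (simp add: exp_add[symmetric])
  then show ?thesis
    by simp
qed

lemma energy_linear_combination: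
  assumes "\<forall>i<m. \<forall>k\<in>{1..d}. onehot z i k = (\<Sum>a\<in>A. \<alpha> a * onehot a i k)"
  shows "energy m d z e = (\<Sum>a\<in>A. \<alpha> a * energy m d a e)"
proof -
  have "energy m d z e = (\<Sum>i<m. \<Sum>k\<in>{1..d}. \<Sum>a\<in>A. \<alpha> a * (onehot a i k * e i k))"
    unfolding energy_def using assms
    by (intro sum.cong refl) (simp add: sum_distrib_right mult.assoc)
  also have "\<dots> = (\<Sum>a\<in>A. \<Sum>i<m. \<Sum>k\<in>{1..d}. \<alpha> a * (onehot a i k * e i k))"
    by (subst sum.swap) (simp only: sum.swap[of _ "{1..d}"])
  also have "\<dots> = (\<Sum>a\<in>A. \<alpha> a * energy m d a e)"
    unfolding energy_def sum_distrib_left ..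
  finally show ?thesis .
qed

lemma subset_Zcross:
  assumes "\<forall>z\<in>A. length z = m"
  shows "A \<subseteq> Zcross m A"
  using assms unfolding Zcross_def by auto

theorem theorem1:
  fixes m d :: nat
    and Ztr :: "nat list set"
    and E Ehat :: "'a::euclidean_space \<Rightarrow> nat \<Rightarrow> nat \<Rightarrow> real"
  assumes Ztr_sub: "Ztr \<subseteq> attrs m d"
    and Ztr_ne: "Ztr \<noteq> {}"
    and E_int: "\<forall>z\<in>Zcross m Ztr. integrable lborel (\<lambda>x. exp (- energy m d z (E x)))"
    and Ehat_int: "\<forall>z\<in>Zcross m Ztr. integrable lborel (\<lambda>x. exp (- energy m d z (Ehat x)))"
    and fit: "\<forall>z\<in>Ztr. \<forall>x. aed m d Ehat z x = aed m d E z x"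
  shows "\<forall>z'\<in>DAff m d Ztr. \<forall>x. aed m d Ehat z' x = aed m d E z' x"
proof (intro ballI allI)
  fix z' x
  assume "z' \<in> DAff m d Ztr"
  have "Ztr \<subseteq> Zcross m Ztr"
    using Ztr_sub by (intro subset_Zcross) (auto simp: attrs_def)
  have "\<exists>c. \<forall>y. energy m d a (Ehat y) = energy m d a (E y) + c" if "a \<in> Ztr" for a
    using normalized_exp_eq_imp_shift[of lborel "\<lambda>y. energy m d a (Ehat y)" "\<lambda>y. energy m d a (E y)"]
      E_int Ehat_int fit that \<open>Ztr \<subseteq> Zcross m Ztr\<close>
    by (auto simp: aed_def emeasure_lborel_UNIV)
  then obtain c where shift: "\<And>a y. a \<in> Ztr \<Longrightarrow> energy m d a (Ehat y) = energy m d a (E y) + c a"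
    by metis
  from \<open>z' \<in> DAff m d Ztr\<close> obtain \<alpha>
    where \<alpha>: "\<forall>i<m. \<forall>k\<in>{1..d}. onehot z' i k = (\<Sum>a\<in>Ztr. \<alpha> a * onehot a i k)"
    unfolding DAff_def by auto
  have "energy m d z' (Ehat y) = energy m d z' (E y) + (\<Sum>a\<in>Ztr. \<alpha> a * c a)" for y
    unfolding energy_linear_combination[OF \<alpha>]
    by (simp add: shift distrib_left sum.distrib)
  then show "aed m d Ehat z' x = aed m d E z' x"
    unfolding aed_def by (rule normalized_exp_shift_invariant)
qed

end
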